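(* Let $\mathscr X$, $\widehat x$, $x^*$ and $\omega$ be as in the context. Then: (a) $\displaystyle\limsup_{h\downarrow0}\max_{0\le t\le 1-h}\frac{|\widehat x(t+h)-\widehat x(t)|}{\omega(h)}=1$. (b) $\displaystyle\limsup_{h\downarrow0}\sup_{x\in\mathscr X}\max_{0\le t\le 1-h}\frac{|x(t+h)-x(t)|}{\omega(h)}=\sqrt2$, and moreover $\displaystyle\limsup_{h\downarrow0}\max_{0\le t\le 1-h}\frac{|x^*(t+h)-x^*(t)|}{\omega(h)}=\sqrt2$.
   Context: The Faber--Schauder functions are $e_{0,0}(t):=(\min\{t,1-t\})^+$ and $e_{m,k}(t):=2^{-m/2}e_{0,0}(2^m t-k)$ for $t\in\mathbb R$, $m\ge1$, $k\in\mathbb Z$. $\mathscr X$ denotes the set of all functions $x\in C[0,1]$ of the form $x=\sum_{m=0}^\infty\sum_{k=0}^{2^m-1}\theta_{m,k}e_{m,k}$ (uniformly convergent series) with $\theta_{m,k}\in\{-1,+1\}$. Define $\widehat x:=\sum_{m=0}^\infty\sum_{k=0}^{2^m-1}e_{m,k}$ and $x^*:=e_{0,0}+\sum_{m=1}^\infty\Big(\sum_{k=0}^{2^{m-1}-1}e_{m,k}-\sum_{\ell=2^{m-1}}^{2^m-1}e_{m,\ell}\Big)$. For $h>0$ let $\nu(h):=\lfloor-\log_2 h\rfloor$ and $\omega(h):=\big(1+\frac1{\sqrt2}\big)h2^{\nu(h)/2}+\frac13(\sqrt8+2)2^{-\nu(h)/2}$. *)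

theory Defs
  imports "HOL-Analysis.Analysis"
begin

definition fs_e00 :: "real \<Rightarrow> real" where
  "fs_e00 t = max (min t (1 - t)) 0"

definition fs_e :: "nat \<Rightarrow> int \<Rightarrow> real \<Rightarrow> real" where
  "fs_e m k t = 2 powr (- real m / 2) * fs_e00 (2 ^ m * t - real_of_int k)"

definition fs_level :: "(nat \<Rightarrow> nat \<Rightarrow> real) \<Rightarrow> nat \<Rightarrow> real \<Rightarrow> real" where
  "fs_level \<theta> m t = (\<Sum>k<2 ^ m. \<theta> m k * fs_e m (int k) t)"

definition fs_series :: "(nat \<Rightarrow> nat \<Rightarrow> real) \<Rightarrow> real \<Rightarrow> real" where
  "fs_series \<theta> t = (\<Sum>m. fs_level \<theta> m t)"

definition fs_X :: "(real \<Rightarrow> real) set" where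
  "fs_X = {x. \<exists>\<theta>. (\<forall>m k. \<theta> m k = 1 \<or> \<theta> m k = -1)
              \<and> uniform_limit {0..1} (\<lambda>n t. \<Sum>m<n. fs_level \<theta> m t) x sequentially
              \<and> x = fs_series \<theta>}"

definition x_hat :: "real \<Rightarrow> real" where
  "x_hat = fs_series (\<lambda>m k. 1)"

definition x_star :: "real \<Rightarrow> real" where
  "x_star = fs_series (\<lambda>m k. if m = 0 then 1 else if k < 2 ^ (m - 1) then 1 else -1)"

definition fs_nu :: "real \<Rightarrow> int" where
  "fs_nu h = \<lfloor>- log 2 h\<rfloor>"

definition fs_omega :: "real \<Rightarrow> real" where
  "fs_omega h = (1 + 1 / sqrt 2) * h * 2 powr (real_of_int (fs_nu h) / 2)
               + 1 / 3 * (sqrt 8 + 2) * 2 powr (- real_of_int (fs_nu h) / 2)"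

text \<open>max over 0 \<le> t \<le> 1-h of |x(t+h)-x(t)|/omega(h), taken in ereal (a supremum,
  equal to the maximum by continuity).\<close>
definition fs_mod :: "(real \<Rightarrow> real) \<Rightarrow> real \<Rightarrow> ereal" where
  "fs_mod x h = (SUP t\<in>{0..1-h}. ereal (\<bar>x (t + h) - x t\<bar> / fs_omega h))"

end

theory Submission
  imports Defs
begin

(* On [0,1] the function x_hat is the Takagi-type function takagi v = sum_j 2^(-j/2) dist(2^j v, Z),
  and the level-j term of any x in script-X is dominated by the j-th term of takagi.
  For 2^(-n-1) < h <= 2^(-n), the first n levels are Lipschitz and contribute at most
  (sqrt 2 + 1)(2^(n/2) - 1) h; the remaining levels are 2^(-n/2) times an increment of takagi
  over the gap c = 2^n h in (1/2, 1].  Now takagi <= (2 + sqrt 2)/3, with equality at 1/3 and 2/3,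
  and its increments over gaps c in [1/2, 1] are at most (sqrt 8 + 2)/3 - c/sqrt 2.  This gives
  |x_hat(t+h) - x_hat(t)| <= omega(h), and, bounding the tail of a general x by twice the maximum
  of takagi, |x(t+h) - x(t)| <= sqrt 2 omega(h).  Both bounds are asymptotically attained at
  h = (2/3) 2^(-n): for x_hat at t = 0, and for x_star across t = 1/2, where the sign change of
  all levels but the first doubles the increment. *)

section \<open>Distance to the nearest integer\<close>

definition dist_int :: "real \<Rightarrow> real" where
  "dist_int v = fs_e00 (frac v)"

lemma fs_e00_eq: "0 \<le> y \<Longrightarrow> y \<le> 1 \<Longrightarrow> fs_e00 y = min y (1 - y)"
  by (simp add: fs_e00_def)

lemma fs_e00_eq_0: "y \<le> 0 \<or> 1 \<le> y \<Longrightarrow> fs_e00 y = 0"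
  by (auto simp: fs_e00_def)

lemma fs_e00_nonneg: "0 \<le> fs_e00 y"
  by (simp add: fs_e00_def)

lemma dist_int_eq: "dist_int v = min (frac v) (1 - frac v)"
  unfolding dist_int_def by (rule fs_e00_eq) (auto simp: frac_lt_1 less_imp_le)

lemma dist_int_le: "dist_int v \<le> \<bar>v - of_int k\<bar>"
proof (cases "k \<le> \<lfloor>v\<rfloor>")
  case True
  then have "real_of_int k \<le> of_int \<lfloor>v\<rfloor>" by simp
  then show ?thesis unfolding dist_int_eq frac_def by linarith
next
  case False
  then have "of_int \<lfloor>v\<rfloor> + 1 \<le> real_of_int k" by linarith
  then show ?thesis unfolding dist_int_eq frac_def by linarith
qed

lemma dist_int_attained: "\<exists>k. dist_int v = \<bar>v - of_int k\<bar>"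
proof (cases "frac v \<le> 1 - frac v")
  case True
  then show ?thesis unfolding dist_int_eq
    by (intro exI[of _ "\<lfloor>v\<rfloor>"]) (simp add: frac_def)
next
  case False
  then show ?thesis unfolding dist_int_eq using frac_lt_1[of v]
    by (intro exI[of _ "\<lfloor>v\<rfloor> + 1"]) (simp add: frac_def)
qed

lemma dist_int_nonneg: "0 \<le> dist_int v"
  by (simp add: dist_int_def fs_e00_nonneg)

lemma dist_int_le_half: "dist_int v \<le> 1/2"
  unfolding dist_int_eq by linarith

lemma dist_int_lipschitz: "\<bar>dist_int a - dist_int b\<bar> \<le> \<bar>a - b\<bar>"
proof -
  obtain ka kb where "dist_int a = \<bar>a - of_int ka\<bar>" "dist_int b = \<bar>b - of_int kb\<bar>"
    using dist_int_attained by metis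
  moreover have "dist_int a \<le> \<bar>a - of_int kb\<bar>" "dist_int b \<le> \<bar>b - of_int ka\<bar>"
    by (rule dist_int_le)+
  ultimately show ?thesis by linarith
qed

lemma dist_int_add_int: "dist_int (v + of_int k) = dist_int v"
proof -
  obtain a b where "dist_int v = \<bar>v - of_int a\<bar>" "dist_int (v + of_int k) = \<bar>v + of_int k - of_int b\<bar>"
    using dist_int_attained by metis
  moreover have "dist_int (v + of_int k) \<le> \<bar>v + of_int k - of_int (a + k)\<bar>"
    and "dist_int v \<le> \<bar>v - of_int (b - k)\<bar>"
    by (rule dist_int_le)+
  ultimately show ?thesis by simp
qed

lemma dist_int_minus: "dist_int (- v) = dist_int v"
proof -
  obtain a b where "dist_int v = \<bar>v - of_int a\<bar>" "dist_int (- v) = \<bar>- v - of_int b\<bar>"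
    using dist_int_attained by metis
  moreover have "dist_int (- v) \<le> \<bar>- v - of_int (- a)\<bar>" and "dist_int v \<le> \<bar>v - of_int (- b)\<bar>"
    by (rule dist_int_le)+
  ultimately show ?thesis by simp
qed

lemma dist_int_one_minus: "dist_int (1 - v) = dist_int v"
  using dist_int_add_int[of "- v" 1] dist_int_minus[of v] by simp

lemma dist_int_of_nat: "dist_int (real n) = 0"
  using dist_int_le[of "real n" "int n"] dist_int_nonneg[of "real n"] by simp

lemma dist_int_id: "0 \<le> v \<Longrightarrow> v \<le> 1/2 \<Longrightarrow> dist_int v = v"
  unfolding dist_int_eq by (simp add: frac_eq)

lemma dist_int_double:
  assumes "1/4 \<le> dist_int v"
  shows "dist_int (2 * v) = 1 - 2 * dist_int v"
proof -
  obtain k where k: "dist_int v = \<bar>v - of_int k\<bar>" using dist_int_attained by blast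
  have "dist_int (2 * v) = dist_int (2 * (v - of_int k))"
    using dist_int_add_int[of "2 * (v - of_int k)" "2 * k"] by (simp add: algebra_simps)
  also have "\<dots> = dist_int (2 * dist_int v)"
    using k dist_int_minus[of "2 * (v - of_int k)"] by (cases "0 \<le> v - of_int k") auto
  also have "\<dots> = dist_int (1 - 2 * dist_int v)"
    using dist_int_one_minus by metis
  also have "\<dots> = 1 - 2 * dist_int v"
    using assms dist_int_le_half[of v] by (intro dist_int_id) auto
  finally show ?thesis .
qed

lemma fs_e00_eq_dist_int: "0 \<le> v \<Longrightarrow> v \<le> 1 \<Longrightarrow> fs_e00 v = dist_int v"
  by (cases "v = 1") (auto simp: dist_int_def frac_eq fs_e00_def)

section \<open>A Takagi function with ratio 1/sqrt 2\<close>

definition \<rho> :: real where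
  "\<rho> = 1 / sqrt 2"

definition takagi_max :: real where
  "takagi_max = (2 + sqrt 2) / 3"

text \<open>The constant (sqrt 8 + 2)/3 of fs_omega.\<close>
definition omega_const :: real where
  "omega_const = (2 * sqrt 2 + 2) / 3"

lemma sqrt2_bounds: "1 < sqrt (2::real)" "sqrt (2::real) < 3/2"
proof -
  show "1 < sqrt (2::real)" by (rule real_less_rsqrt) simp
  have "sqrt (2::real) < sqrt ((3/2) ^ 2)" by (rule real_sqrt_less_mono) (simp add: power2_eq_square)
  then show "sqrt (2::real) < 3/2" by simp
qed

lemma rho_eq: "\<rho> = sqrt 2 / 2"
  unfolding \<rho>_def by (simp add: field_simps)

lemma rho_pos: "0 < \<rho>"
  by (simp add: \<rho>_def)

lemma rho_bounds: "1/2 < \<rho>" "\<rho> < 3/4"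
  using sqrt2_bounds unfolding rho_eq by simp_all

lemma rho_lt_1: "\<rho> < 1"
  using rho_bounds by simp

lemma rho_pow_mult_sqrt2_pow: "\<rho> ^ k * sqrt 2 ^ k = 1"
  by (simp add: \<rho>_def power_mult_distrib[symmetric])

lemma two_pow_eq_sqrt2_pow: "(2::real) ^ k = sqrt 2 ^ k * sqrt 2 ^ k"
  by (simp add: power_mult_distrib[symmetric])

lemma half_pow_eq_rho_pow: "(1/2::real) ^ k = \<rho> ^ k * \<rho> ^ k"
  by (simp add: \<rho>_def power_mult_distrib[symmetric])

lemma powr_half_eq_sqrt2_pow: "2 powr (real m / 2) = sqrt 2 ^ m"
proof -
  have "2 powr (real m / 2) = (2 powr (1/2)) powr real m" by (simp add: powr_powr)
  also have "\<dots> = sqrt 2 ^ m" by (simp add: powr_half_sqrt powr_realpow)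
  finally show ?thesis .
qed

lemma powr_minus_half_eq_rho_pow: "2 powr (- real m / 2) = \<rho> ^ m"
  using powr_half_eq_sqrt2_pow[of m]
  by (simp add: powr_minus \<rho>_def power_one_over minus_divide_left[symmetric] inverse_eq_divide)

lemma sum_rho_pow_two_pow: "(\<Sum>j<k. \<rho> ^ j * 2 ^ j) = (sqrt 2 ^ k - 1) * (sqrt 2 + 1)"
proof -
  have "(\<Sum>j<k. \<rho> ^ j * 2 ^ j) = (\<Sum>j<k. sqrt 2 ^ j)"
    by (simp add: rho_eq power_mult_distrib[symmetric])
  also have "\<dots> = (sqrt 2 ^ k - 1) / (sqrt 2 - 1)"
    by (rule geometric_sum) simp
  also have "\<dots> = (sqrt 2 ^ k - 1) * (sqrt 2 + 1)"
  proof -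
    have "(sqrt 2 - 1) * (sqrt 2 + 1) = (1::real)" by (simp add: algebra_simps)
    then show ?thesis by (simp add: field_simps)
  qed
  finally show ?thesis .
qed

lemma takagi_max_fixpoint: "1/3 + \<rho> * takagi_max = takagi_max"
  unfolding takagi_max_def rho_eq by (simp add: field_simps)

lemma takagi_max_fixpoint2: "1/3 + \<rho> / 3 + \<rho> * \<rho> * takagi_max = takagi_max"
  unfolding takagi_max_def rho_eq by (simp add: field_simps)

lemma takagi_max_nonneg: "0 \<le> takagi_max"
  unfolding takagi_max_def by simp

lemma le_of_le_plus_rho_pow:
  fixes x a C :: real
  assumes "\<And>N. x \<le> a + C * \<rho> ^ N" and "0 \<le> C"
  shows "x \<le> a"
proof -
  have "(\<lambda>N. a + C * \<rho> ^ N) \<longlonglongrightarrow> a + C * 0"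
    using rho_pos rho_lt_1 by (intro tendsto_intros LIMSEQ_power_zero) simp
  then show ?thesis using assms(1) by (intro LIMSEQ_le_const) auto
qed

definition takagi :: "real \<Rightarrow> real" where
  "takagi v = (\<Sum>j. \<rho> ^ j * dist_int (2 ^ j * v))"

lemma summable_rho_pow: "summable (\<lambda>j. \<rho> ^ j)"
  using rho_pos rho_lt_1 by (intro summable_geometric) simp

lemma summable_takagi: "summable (\<lambda>j. \<rho> ^ j * dist_int (2 ^ j * v))"
proof (rule summable_comparison_test[OF _ summable_rho_pow])
  have "\<bar>dist_int (2 ^ n * v)\<bar> \<le> 1" for n
    using dist_int_nonneg dist_int_le_half[of "2 ^ n * v"] by simp
  then show "\<exists>N. \<forall>n\<ge>N. norm (\<rho> ^ n * dist_int (2 ^ n * v)) \<le> \<rho> ^ n"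
    using rho_pos by (auto simp: abs_mult intro: mult_left_le)
qed

lemma sums_takagi: "(\<lambda>j. \<rho> ^ j * dist_int (2 ^ j * v)) sums takagi v"
  unfolding takagi_def by (rule summable_sums[OF summable_takagi])

lemma takagi_nonneg: "0 \<le> takagi v"
  unfolding takagi_def using rho_pos dist_int_nonneg
  by (intro suminf_nonneg[OF summable_takagi]) simp

lemma takagi_rec: "takagi v = dist_int v + \<rho> * takagi (2 * v)"
proof -
  have "(\<Sum>j. \<rho> ^ Suc j * dist_int (2 ^ Suc j * v)) = takagi v - dist_int v"
    unfolding takagi_def using suminf_split_head[OF summable_takagi] by simp
  moreover have "(\<Sum>j. \<rho> ^ Suc j * dist_int (2 ^ Suc j * v)) = \<rho> * takagi (2 * v)"
    unfolding takagi_def using suminf_mult[OF summable_takagi, of \<rho> "2 * v"]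
    by (simp add: mult.assoc mult.left_commute)
  ultimately show ?thesis by simp
qed

lemma takagi_split:
  "takagi v = (\<Sum>j<n. \<rho> ^ j * dist_int (2 ^ j * v)) + \<rho> ^ n * takagi (2 ^ n * v)"
proof (induction n)
  case (Suc n)
  then show ?case using takagi_rec[of "2 ^ n * v"] by (simp add: algebra_simps)
qed simp

lemma sums_takagi_tail:
  "(\<lambda>j. \<rho> ^ (j + n) * dist_int (2 ^ (j + n) * v)) sums (\<rho> ^ n * takagi (2 ^ n * v))"
  using sums_mult[OF sums_takagi, of "\<rho> ^ n" "2 ^ n * v"]
  by (simp add: power_add mult.assoc mult.left_commute)

lemma takagi_add_int: "takagi (v + of_int k) = takagi v"
proof -
  have "dist_int (2 ^ j * (v + of_int k)) = dist_int (2 ^ j * v)" for j :: nat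
    using dist_int_add_int[of "2 ^ j * v" "2 ^ j * k"] by (simp add: algebra_simps)
  then show ?thesis unfolding takagi_def by simp
qed

lemma takagi_minus: "takagi (- v) = takagi v"
  unfolding takagi_def using dist_int_minus by (metis mult_minus_right)

lemma takagi_one_minus: "takagi (1 - v) = takagi v"
  using takagi_add_int[of "- v" 1] takagi_minus[of v] by simp

lemma takagi_0: "takagi 0 = 0"
  unfolding takagi_def using dist_int_id[of 0] by simp

text \<open>Above 1/3, the identity dist_int (2v) = 1 - 2 dist_int v lets two consecutive terms
  be bounded together by 1/3 + \<rho>/3; otherwise the first term alone is at most 1/3.\<close>
lemma takagi_le_approx: "takagi v \<le> takagi_max + \<rho> ^ N"
proof (induction N arbitrary: v)
  case 0
  have "takagi v \<le> (\<Sum>j. \<rho> ^ j * (1/2))"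
    unfolding takagi_def using rho_pos dist_int_le_half
    by (intro suminf_le summable_takagi summable_mult2 summable_rho_pow) (simp add: mult_left_mono)
  also have "\<dots> = 1 / (2 * (1 - \<rho>))"
    using suminf_geometric[of \<rho>] rho_pos rho_lt_1 suminf_mult2[OF summable_rho_pow, of "1/2"]
    by (simp add: algebra_simps)
  also have "\<dots> \<le> 2"
    using rho_bounds by (simp add: divide_le_eq)
  also have "\<dots> \<le> takagi_max + 1"
    using sqrt2_bounds unfolding takagi_max_def by simp
  finally show ?case by simp
next
  case (Suc N)
  show ?case
  proof (cases "dist_int v \<le> 1/3")
    case True
    have "\<rho> * takagi (2 * v) \<le> \<rho> * (takagi_max + \<rho> ^ N)"
      using Suc.IH rho_pos by (intro mult_left_mono) auto
    then show ?thesis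
      using takagi_rec[of v] True takagi_max_fixpoint by (simp add: algebra_simps)
  next
    case False
    have double: "dist_int (2 * v) = 1 - 2 * dist_int v"
      using False by (intro dist_int_double) simp
    have "(1 - 2 * \<rho>) * (dist_int v - 1/3) \<le> 0"
      using False rho_bounds by (intro mult_nonpos_nonneg) auto
    then have head: "dist_int v + \<rho> * dist_int (2 * v) \<le> 1/3 + \<rho> / 3"
      unfolding double by (simp add: algebra_simps)
    have "\<rho> * \<rho> * takagi (2 * (2 * v)) \<le> \<rho> * \<rho> * (takagi_max + \<rho> ^ N)"
      using Suc.IH rho_pos by (intro mult_left_mono) auto
    moreover have "\<rho> * \<rho> * \<rho> ^ N \<le> \<rho> ^ Suc N"
      using rho_pos rho_lt_1 by (simp add: mult_left_le_one_le)
    ultimately show ?thesis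
      using takagi_rec[of v] takagi_rec[of "2 * v"] head takagi_max_fixpoint2
      by (simp add: algebra_simps)
  qed
qed

lemma takagi_le_max: "takagi v \<le> takagi_max"
  using le_of_le_plus_rho_pow[of "takagi v" takagi_max 1] takagi_le_approx by simp

lemma takagi_diff_le_max: "\<bar>takagi a - takagi b\<bar> \<le> takagi_max"
  using takagi_nonneg[of a] takagi_nonneg[of b] takagi_le_max[of a] takagi_le_max[of b] by linarith

lemma takagi_two_thirds: "takagi (2/3) = takagi_max"
proof -
  have "dist_int (2/3) = 1/3"
    using dist_int_one_minus[of "1/3"] dist_int_id[of "1/3"] by simp
  moreover have "takagi (4/3) = takagi (2/3)"
    using takagi_add_int[of "1/3" 1] takagi_one_minus[of "2/3"] by simp
  ultimately have "takagi (2/3) = 1/3 + \<rho> * takagi (2/3)"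
    using takagi_rec[of "2/3"] by simp
  then have "takagi (2/3) * (1 - \<rho>) = takagi_max * (1 - \<rho>)"
    using takagi_max_fixpoint by (simp add: algebra_simps)
  then show ?thesis using rho_lt_1 by simp
qed

section \<open>Increments of the Takagi function\<close>

lemma exists_dyadic_rescale:
  fixes s :: real
  assumes "0 < s" "s \<le> 1"
  shows "\<exists>k. 1/2 < 2 ^ k * s \<and> 2 ^ k * s \<le> 1"
proof -
  obtain n where "(1/2::real) ^ n < s"
    using real_arch_pow_inv[OF assms(1), of "1/2"] by auto
  then show ?thesis using assms(2)
  proof (induction n arbitrary: s)
    case (Suc n)
    show ?case
    proof (cases "1/2 < s")
      case False
      have "\<exists>k. 1/2 < 2 ^ k * (2 * s) \<and> 2 ^ k * (2 * s) \<le> 1"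
        using Suc False by (intro Suc.IH) auto
      then obtain k where "1/2 < 2 ^ k * (2 * s) \<and> 2 ^ k * (2 * s) \<le> 1" by blast
      then show ?thesis by (intro exI[of _ "Suc k"]) (simp add: algebra_simps)
    qed (use Suc.prems in \<open>auto intro: exI[of _ 0]\<close>)
  qed simp
qed

lemma takagi_increment_split:
  "\<bar>takagi (w + s) - takagi w\<bar>
     \<le> (sqrt 2 ^ k - 1) * (sqrt 2 + 1) * \<bar>s\<bar>
        + \<rho> ^ k * \<bar>takagi (2 ^ k * w + 2 ^ k * s) - takagi (2 ^ k * w)\<bar>"
proof -
  let ?d = "\<lambda>j. \<rho> ^ j * (dist_int (2 ^ j * (w + s)) - dist_int (2 ^ j * w))"
  have "takagi (w + s) - takagi w
      = (\<Sum>j<k. ?d j) + \<rho> ^ k * (takagi (2 ^ k * w + 2 ^ k * s) - takagi (2 ^ k * w))"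
    using takagi_split[of "w + s" k] takagi_split[of w k]
    by (simp add: algebra_simps sum_subtractf)
  moreover have "\<bar>?d j\<bar> \<le> \<rho> ^ j * 2 ^ j * \<bar>s\<bar>" for j
  proof -
    have "\<bar>dist_int (2 ^ j * (w + s)) - dist_int (2 ^ j * w)\<bar> \<le> 2 ^ j * \<bar>s\<bar>"
      using dist_int_lipschitz[of "2 ^ j * (w + s)" "2 ^ j * w"]
      by (simp add: algebra_simps abs_mult)
    then show ?thesis using rho_pos by (simp add: abs_mult mult_left_mono mult.assoc)
  qed
  then have "\<bar>\<Sum>j<k. ?d j\<bar> \<le> (\<Sum>j<k. \<rho> ^ j * 2 ^ j) * \<bar>s\<bar>"
    unfolding sum_distrib_right by (intro order.trans[OF sum_abs sum_mono])
  moreover have "\<bar>\<rho> ^ k * (takagi (2 ^ k * w + 2 ^ k * s) - takagi (2 ^ k * w))\<bar>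
      = \<rho> ^ k * \<bar>takagi (2 ^ k * w + 2 ^ k * s) - takagi (2 ^ k * w)\<bar>"
    using rho_pos by (simp add: abs_mult)
  ultimately show ?thesis
    unfolding sum_rho_pow_two_pow by (smt (verit, best) abs_triangle_ineq)
qed

text \<open>The increment bound is proved by rescaling the complementary gap 1 - c back into (1/2, 1];
  the next two inequalities say that the bound reproduces itself under one such rescaling by 2^k,
  with T = 2^(k/2).  After multiplying by 6, the difference of the two sides is a polynomial in
  d = T - 2 with nonnegative coefficients.\<close>

lemma rescale_ineq_short:
  assumes c: "1/2 \<le> c" "c \<le> 2/3" and T: "T = sqrt 2 \<or> 2 \<le> T"
  shows "c * (T - 1) * (sqrt 2 + 1) + takagi_max * T \<le> (omega_const - \<rho>) * T\<^sup>2 + \<rho> * c"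
proof -
  define s where "s = sqrt (2::real)"
  have s: "0 \<le> s" "s \<le> 2" "s * s = 2" using sqrt2_bounds by (auto simp: s_def)
  have "0 \<le> (s + 4) * (T * T) + 3 * s * c - (6 * c * (T - 1) * (s + 1) + 2 * (2 + s) * T)"
  proof (cases "T = s")
    case True
    have "(s + 4) * (T * T) + 3 * s * c - (6 * c * (T - 1) * (s + 1) + 2 * (2 + s) * T)
        = (2 - s) * (2 - 3 * c) + (s * s - 2) * (s + 2 - 6 * c)"
      unfolding True by algebra
    moreover have "0 \<le> (2 - s) * (2 - 3 * c)" using s c by (intro mult_nonneg_nonneg) auto
    ultimately show ?thesis using s(3) by simp
  next
    case False
    define d where "d = T - 2"
    have d: "0 \<le> d" using T False s_def d_def by auto
    have e: "(s + 4) * (T * T) + 3 * s * c - (6 * c * (T - 1) * (s + 1) + 2 * (2 + s) * T)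
        = (8 - c * (3 * s + 6)) + d * (2 * s + 12 - c * (6 * s + 6)) + (s + 4) * (d * d)"
      unfolding d_def by algebra
    have c1: "c * (3 * s + 6) \<le> 2 * s + 4" and c2: "c * (6 * s + 6) \<le> 4 * s + 4"
      using mult_right_mono[of c "2/3" "3 * s + 6"] mult_right_mono[of c "2/3" "6 * s + 6"] s c
      by (simp_all add: algebra_simps)
    have "0 \<le> d * (2 * s + 12 - c * (6 * s + 6))"
      by (rule mult_nonneg_nonneg) (use d s c2 in linarith)+
    then show ?thesis unfolding e using s c1 by (intro add_nonneg_nonneg) auto
  qed
  then show ?thesis
    unfolding takagi_max_def omega_const_def rho_eq s_def power2_eq_square by (simp add: field_simps)
qed

lemma rescale_ineq_long:
  assumes c: "2/3 \<le> c" "c \<le> 1" and T: "2 \<le> T"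
  shows "c * (T - 1) * (sqrt 2 + 1) + (omega_const - \<rho> * c) * T \<le> (omega_const - \<rho>) * T\<^sup>2 + \<rho> * c"
proof -
  define s where "s = sqrt (2::real)"
  have s: "0 \<le> s" "s \<le> 2" using sqrt2_bounds by (auto simp: s_def)
  define d where "d = T - 2"
  have d: "0 \<le> d" using T d_def by simp
  have e: "(s + 4) * (T * T) + 3 * s * c - (6 * c * (T - 1) * (s + 1) + (4 * s + 4 - 3 * s * c) * T)
      = (8 - 4 * s - c * (6 - 3 * s)) + d * (12 - c * (3 * s + 6)) + (s + 4) * (d * d)"
    unfolding d_def by algebra
  have c1: "c * (6 - 3 * s) \<le> 6 - 3 * s" and c2: "c * (3 * s + 6) \<le> 3 * s + 6"
    using mult_right_mono[of c 1 "6 - 3 * s"] mult_right_mono[of c 1 "3 * s + 6"] s c by simp_all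
  have "0 \<le> d * (12 - c * (3 * s + 6))"
    by (rule mult_nonneg_nonneg) (use d s c2 in linarith)+
  then have "0 \<le> (s + 4) * (T * T) + 3 * s * c - (6 * c * (T - 1) * (s + 1) + (4 * s + 4 - 3 * s * c) * T)"
    unfolding e using s c1 by (intro add_nonneg_nonneg) auto
  then show ?thesis
    unfolding omega_const_def rho_eq s_def power2_eq_square by (simp add: field_simps)
qed

lemma takagi_max_le_omega_const: "takagi_max \<le> omega_const - \<rho> * (2/3)"
  unfolding takagi_max_def omega_const_def rho_eq by simp

lemma omega_const_ge_rho: "\<rho> \<le> omega_const"
  unfolding omega_const_def rho_eq by simp

lemma rescaled_increment_le:
  fixes s X :: real
  assumes "0 \<le> s"
    and "2 ^ k * s * (sqrt 2 ^ k - 1) * (sqrt 2 + 1) + X * sqrt 2 ^ k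
           \<le> (omega_const - \<rho>) * (sqrt 2 ^ k)\<^sup>2 + \<rho> * (2 ^ k * s)"
  shows "(sqrt 2 ^ k - 1) * (sqrt 2 + 1) * s + \<rho> ^ k * X \<le> omega_const - \<rho> + \<rho> * s"
proof -
  define T where "T = sqrt (2::real) ^ k"
  have two_pow: "2 ^ k = T * T" unfolding T_def by (rule two_pow_eq_sqrt2_pow)
  have "((T - 1) * (sqrt 2 + 1) * s + \<rho> ^ k * X) * (T * T)
      = 2 ^ k * s * (T - 1) * (sqrt 2 + 1) + (\<rho> ^ k * T) * X * T"
    unfolding two_pow by (simp add: algebra_simps)
  also have "\<dots> \<le> (omega_const - \<rho> + \<rho> * s) * (T * T)"
    using assms(2) rho_pow_mult_sqrt2_pow[of k] unfolding T_def[symmetric] two_pow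
    by (simp add: algebra_simps power2_eq_square)
  finally show ?thesis unfolding T_def by (simp add: mult_le_cancel_right_pos)
qed

text \<open>Since takagi has period 1, an increment over c = 1 - s is an increment over s; rescaling
  it by 2^k brings the gap back into (1/2, 1].\<close>
lemma takagi_increment_rescale:
  assumes "0 < s" "s \<le> 1/3"
  obtains k v where "1/2 < 2 ^ k * s" "2 ^ k * s \<le> 1" "1 \<le> k"
    and "\<bar>takagi (u + (1 - s)) - takagi u\<bar>
           \<le> (sqrt 2 ^ k - 1) * (sqrt 2 + 1) * s + \<rho> ^ k * \<bar>takagi (v + 2 ^ k * s) - takagi v\<bar>"
proof -
  obtain k where k: "1/2 < 2 ^ k * s" "2 ^ k * s \<le> 1"
    using exists_dyadic_rescale[of s] assms by auto
  have "k \<noteq> 0" using k assms by (cases k) auto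
  have "u + (1 - s) = (u - s) + of_int 1" by simp
  then have "\<bar>takagi (u + (1 - s)) - takagi u\<bar> = \<bar>takagi ((u - s) + s) - takagi (u - s)\<bar>"
    by (simp only: takagi_add_int abs_minus_commute) simp
  also have "\<dots> \<le> (sqrt 2 ^ k - 1) * (sqrt 2 + 1) * s
      + \<rho> ^ k * \<bar>takagi (2 ^ k * (u - s) + 2 ^ k * s) - takagi (2 ^ k * (u - s))\<bar>"
    using takagi_increment_split[of "u - s" s k] assms by simp
  finally show ?thesis using that k \<open>k \<noteq> 0\<close> by simp
qed

lemma takagi_increment_step:
  assumes c: "2/3 \<le> c" "c \<le> 1" and E: "0 \<le> E"
    and IH: "\<And>v c'. 2/3 \<le> c' \<Longrightarrow> c' \<le> 1 \<Longrightarrow> \<bar>takagi (v + c') - takagi v\<bar> \<le> omega_const - \<rho> * c' + E"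
  shows "\<bar>takagi (u + c) - takagi u\<bar> \<le> omega_const - \<rho> * c + \<rho> * E"
proof (cases "c = 1")
  case True
  have "0 \<le> \<rho> * E" using rho_pos E by simp
  then show ?thesis using True takagi_add_int[of u 1] omega_const_ge_rho by simp
next
  case False
  define s where "s = 1 - c"
  have s: "0 < s" "s \<le> 1/3" using c False s_def by auto
  obtain k v where k: "1/2 < 2 ^ k * s" "2 ^ k * s \<le> 1" "1 \<le> k"
    and split: "\<bar>takagi (u + c) - takagi u\<bar>
      \<le> (sqrt 2 ^ k - 1) * (sqrt 2 + 1) * s + \<rho> ^ k * \<bar>takagi (v + 2 ^ k * s) - takagi v\<bar>"
    using takagi_increment_rescale[OF s, of u] unfolding s_def by auto
  have rhs: "omega_const - \<rho> * c + \<rho> * E = omega_const - \<rho> + \<rho> * s + \<rho> * E"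
    unfolding s_def by (simp add: algebra_simps)
  have rho_k: "0 < \<rho> ^ k" "\<rho> ^ k \<le> \<rho>"
    using rho_pos rho_lt_1 power_decreasing[of 1 k \<rho>] k(3) by auto
  have sqrt2_pow: "k = 1 \<or> 2 \<le> sqrt (2::real) ^ k"
  proof (cases "k = 1")
    case False
    then have "sqrt (2::real) ^ 2 \<le> sqrt 2 ^ k" using k(3) by (intro power_increasing) auto
    then show ?thesis by simp
  qed simp
  show ?thesis
  proof (cases "2 ^ k * s \<le> 2/3")
    case True
    have "\<rho> ^ k * \<bar>takagi (v + 2 ^ k * s) - takagi v\<bar> \<le> \<rho> ^ k * takagi_max"
      by (rule mult_left_mono[OF takagi_diff_le_max less_imp_le[OF rho_k(1)]])
    moreover have "(sqrt 2 ^ k - 1) * (sqrt 2 + 1) * s + \<rho> ^ k * takagi_max \<le> omega_const - \<rho> + \<rho> * s"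
      by (rule rescaled_increment_le[OF _ rescale_ineq_short]) (use True k sqrt2_pow s in auto)
    moreover have "0 \<le> \<rho> * E" using rho_pos E by simp
    ultimately show ?thesis using split rhs by linarith
  next
    case False
    have "k \<noteq> 1" using False s by auto
    then have T: "2 \<le> sqrt (2::real) ^ k" using sqrt2_pow by simp
    have c': "2/3 \<le> 2 ^ k * s" "2 ^ k * s \<le> 1" using False k by auto
    have "\<rho> ^ k * \<bar>takagi (v + 2 ^ k * s) - takagi v\<bar> \<le> \<rho> ^ k * (omega_const - \<rho> * (2 ^ k * s) + E)"
      by (rule mult_left_mono[OF IH[OF c'] less_imp_le[OF rho_k(1)]])
    also have "\<dots> \<le> \<rho> ^ k * (omega_const - \<rho> * (2 ^ k * s)) + \<rho> * E"
      using mult_right_mono[OF rho_k(2) E] by (simp add: distrib_left)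
    moreover have "(sqrt 2 ^ k - 1) * (sqrt 2 + 1) * s + \<rho> ^ k * (omega_const - \<rho> * (2 ^ k * s))
        \<le> omega_const - \<rho> + \<rho> * s"
      by (rule rescaled_increment_le[OF _ rescale_ineq_long]) (use c' T s in auto)
    ultimately show ?thesis using split rhs by linarith
  qed
qed

lemma takagi_increment_le_approx:
  "2/3 \<le> c \<Longrightarrow> c \<le> 1 \<Longrightarrow> \<bar>takagi (u + c) - takagi u\<bar> \<le> omega_const - \<rho> * c + 2 * takagi_max * \<rho> ^ N"
proof (induction N arbitrary: u c)
  case 0
  have "\<rho> * c \<le> \<rho>" using 0 rho_pos by (simp add: mult_left_le)
  then have "\<rho> * c \<le> omega_const" using omega_const_ge_rho by linarith
  then show ?case using takagi_diff_le_max[of "u + c" u] takagi_max_nonneg by simp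
next
  case (Suc N)
  have "\<bar>takagi (u + c) - takagi u\<bar> \<le> omega_const - \<rho> * c + \<rho> * (2 * takagi_max * \<rho> ^ N)"
    by (rule takagi_increment_step[OF Suc.prems _ Suc.IH]) (use takagi_max_nonneg rho_pos in simp)
  moreover have "\<rho> * (2 * takagi_max * \<rho> ^ N) = 2 * takagi_max * \<rho> ^ Suc N"
    by simp
  ultimately show ?case by simp
qed

lemma takagi_increment_le:
  assumes "1/2 \<le> c" "c \<le> 1"
  shows "\<bar>takagi (u + c) - takagi u\<bar> \<le> omega_const - \<rho> * c"
proof (cases "c \<le> 2/3")
  case True
  then have "\<rho> * c \<le> \<rho> * (2/3)" using rho_pos by (intro mult_left_mono) auto
  then show ?thesis using takagi_diff_le_max[of "u + c" u] takagi_max_le_omega_const by linarith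
next
  case False
  show ?thesis
    by (rule le_of_le_plus_rho_pow[OF takagi_increment_le_approx])
      (use False assms takagi_max_nonneg in auto)
qed

section \<open>Faber--Schauder series with signs\<close>

definition sign_coeffs :: "(nat \<Rightarrow> nat \<Rightarrow> real) \<Rightarrow> bool" where
  "sign_coeffs \<theta> \<longleftrightarrow> (\<forall>m k. \<theta> m k = 1 \<or> \<theta> m k = -1)"

lemma sign_coeffs_abs: "sign_coeffs \<theta> \<Longrightarrow> \<bar>\<theta> m k\<bar> = 1"
  unfolding sign_coeffs_def by (metis abs_minus_cancel abs_one)

lemma fs_e_eq: "fs_e m (int k) t = \<rho> ^ m * fs_e00 (2 ^ m * t - real k)"
  unfolding fs_e_def powr_minus_half_eq_rho_pow by simp

lemma fs_level_eq: "fs_level \<theta> m t = \<rho> ^ m * (\<Sum>k<2 ^ m. \<theta> m k * fs_e00 (2 ^ m * t - real k))"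
  unfolding fs_level_def fs_e_eq sum_distrib_left by (intro sum.cong refl) (simp only: mult.left_commute)

lemma fs_e00_shift_eq:
  assumes "0 \<le> a"
  shows "fs_e00 (a - real k) = (if k = nat \<lfloor>a\<rfloor> then dist_int a else 0)"
proof (cases "k = nat \<lfloor>a\<rfloor>")
  case True
  then have "a - real k = frac a" using assms by (simp add: frac_def)
  then show ?thesis using True by (simp add: dist_int_def)
next
  case False
  then have "int k + 1 \<le> \<lfloor>a\<rfloor> \<or> \<lfloor>a\<rfloor> < int k" using assms by linarith
  then have "real k + 1 \<le> a \<or> a < real k"
    by linarith
  then show ?thesis using False fs_e00_eq_0 by auto
qed

text \<open>At level m exactly one hat is active at each point, so the unsigned level sum is the
  periodic tent dist_int.\<close>
lemma sum_fs_e00_shift: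
  assumes "0 \<le> a" "a \<le> real N"
  shows "(\<Sum>k<N. fs_e00 (a - real k)) = dist_int a"
proof -
  have "(\<Sum>k<N. fs_e00 (a - real k)) = (if nat \<lfloor>a\<rfloor> < N then dist_int a else 0)"
    using fs_e00_shift_eq[OF assms(1)] by (simp add: sum.delta')
  moreover have "nat \<lfloor>a\<rfloor> < N \<or> a = real N"
  proof (rule disjCI)
    assume "a \<noteq> real N"
    then have "a < real N" using assms by simp
    then show "nat \<lfloor>a\<rfloor> < N" using assms by linarith
  qed
  ultimately show ?thesis using dist_int_of_nat by auto
qed

lemma sum_fs_e00_shift_diff_le:
  assumes "0 \<le> a" "a \<le> b" "b \<le> a + 1"
  shows "(\<Sum>k<N. \<bar>fs_e00 (b - real k) - fs_e00 (a - real k)\<bar>) \<le> b - a"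
proof -
  define ka kb where "ka = nat \<lfloor>a\<rfloor>" and "kb = nat \<lfloor>b\<rfloor>"
  have eq: "(\<Sum>k<N. \<bar>fs_e00 (b - real k) - fs_e00 (a - real k)\<bar>)
      = (\<Sum>k<N. \<bar>(if k = kb then dist_int b else 0) - (if k = ka then dist_int a else 0)\<bar>)"
    using fs_e00_shift_eq[of a] fs_e00_shift_eq[of b] assms ka_def kb_def by simp
  show ?thesis
  proof (cases "ka = kb")
    case True
    have "(\<Sum>k<N. \<bar>(if k = kb then dist_int b else 0) - (if k = ka then dist_int a else 0)\<bar>)
        = (\<Sum>k<N. if k = kb then \<bar>dist_int b - dist_int a\<bar> else 0)"
      using True by (intro sum.cong) auto
    also have "\<dots> \<le> \<bar>dist_int b - dist_int a\<bar>" by (simp add: sum.delta')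
    also have "\<dots> \<le> b - a" using dist_int_lipschitz[of b a] assms by simp
    finally show ?thesis using eq by simp
  next
    case False
    have "\<lfloor>a\<rfloor> \<le> \<lfloor>b\<rfloor>" "\<lfloor>b\<rfloor> \<le> \<lfloor>a + 1\<rfloor>" using assms floor_mono[of b "a + 1"] by (simp_all add: floor_mono)
    then have floor_b: "\<lfloor>b\<rfloor> = \<lfloor>a\<rfloor> + 1" using False ka_def kb_def by simp
    have "(\<Sum>k<N. \<bar>(if k = kb then dist_int b else 0) - (if k = ka then dist_int a else 0)\<bar>)
        \<le> (\<Sum>k<N. (if k = kb then dist_int b else 0) + (if k = ka then dist_int a else 0))"
      using dist_int_nonneg False by (intro sum_mono) auto
    also have "\<dots> \<le> dist_int b + dist_int a"
      using dist_int_nonneg[of a] dist_int_nonneg[of b] by (simp add: sum.distrib sum.delta')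
    also have "\<dots> \<le> frac b + (1 - frac a)" unfolding dist_int_eq by linarith
    also have "\<dots> = b - a" using floor_b by (simp add: frac_def)
    finally show ?thesis using eq by simp
  qed
qed

lemma fs_level_abs_le:
  assumes "sign_coeffs \<theta>" "0 \<le> t" "t \<le> 1"
  shows "\<bar>fs_level \<theta> m t\<bar> \<le> \<rho> ^ m * dist_int (2 ^ m * t)"
proof -
  have "\<bar>\<Sum>k<2 ^ m. \<theta> m k * fs_e00 (2 ^ m * t - real k)\<bar> \<le> (\<Sum>k<(2::nat) ^ m. fs_e00 (2 ^ m * t - real k))"
    using sign_coeffs_abs[OF assms(1)] fs_e00_nonneg
    by (auto intro!: order.trans[OF sum_abs] simp: abs_mult)
  also have "\<dots> = dist_int (2 ^ m * t)"
    using assms by (intro sum_fs_e00_shift) (auto simp: mult_le_cancel_left1)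
  finally show ?thesis unfolding fs_level_eq using rho_pos by (simp add: abs_mult mult_left_mono)
qed

lemma fs_level_abs_le_rho_pow:
  assumes "sign_coeffs \<theta>" "0 \<le> t" "t \<le> 1"
  shows "\<bar>fs_level \<theta> m t\<bar> \<le> \<rho> ^ m"
proof -
  have "\<rho> ^ m * dist_int (2 ^ m * t) \<le> \<rho> ^ m * 1"
    using dist_int_le_half[of "2 ^ m * t"] rho_pos by (intro mult_left_mono) auto
  then show ?thesis using fs_level_abs_le[OF assms, of m] by simp
qed

lemma fs_level_diff_le:
  assumes "sign_coeffs \<theta>" "0 \<le> t" "0 \<le> h" "t + h \<le> 1" "2 ^ m * h \<le> 1"
  shows "\<bar>fs_level \<theta> m (t + h) - fs_level \<theta> m t\<bar> \<le> \<rho> ^ m * 2 ^ m * h"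
proof -
  have "fs_level \<theta> m (t + h) - fs_level \<theta> m t
      = \<rho> ^ m * (\<Sum>k<2 ^ m. \<theta> m k * (fs_e00 (2 ^ m * (t + h) - real k) - fs_e00 (2 ^ m * t - real k)))"
    unfolding fs_level_eq by (simp add: right_diff_distrib sum_subtractf)
  moreover have "\<bar>\<Sum>k<2 ^ m. \<theta> m k * (fs_e00 (2 ^ m * (t + h) - real k) - fs_e00 (2 ^ m * t - real k))\<bar>
      \<le> (\<Sum>k<(2::nat) ^ m. \<bar>fs_e00 (2 ^ m * (t + h) - real k) - fs_e00 (2 ^ m * t - real k)\<bar>)"
    using sign_coeffs_abs[OF assms(1)] by (auto intro!: order.trans[OF sum_abs] simp: abs_mult)
  moreover have "\<dots> \<le> 2 ^ m * h"
    using sum_fs_e00_shift_diff_le[of "2 ^ m * t" "2 ^ m * (t + h)"] assms by (simp add: algebra_simps)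
  ultimately show ?thesis using rho_pos by (simp add: abs_mult mult_left_mono mult.assoc)
qed

lemma summable_fs_level:
  assumes "sign_coeffs \<theta>" "0 \<le> t" "t \<le> 1"
  shows "summable (\<lambda>m. fs_level \<theta> m t)"
  by (rule summable_comparison_test[OF _ summable_rho_pow]) (use fs_level_abs_le_rho_pow[OF assms] in auto)

lemma fs_X_eq: "fs_X = fs_series ` Collect sign_coeffs"
proof -
  have "uniform_limit {0..1} (\<lambda>n t. \<Sum>m<n. fs_level \<theta> m t) (fs_series \<theta>) sequentially"
    if "sign_coeffs \<theta>" for \<theta>
    unfolding fs_series_def
    by (rule Weierstrass_m_test[OF _ summable_rho_pow]) (use fs_level_abs_le_rho_pow[OF that] in auto)
  then show ?thesis unfolding fs_X_def sign_coeffs_def by auto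
qed

lemma x_hat_eq_takagi:
  assumes "0 \<le> t" "t \<le> 1"
  shows "x_hat t = takagi t"
proof -
  have "fs_level (\<lambda>m k. 1) m t = \<rho> ^ m * dist_int (2 ^ m * t)" for m
    using sum_fs_e00_shift[of "2 ^ m * t" "2 ^ m"] assms
    unfolding fs_level_eq by (simp add: mult_le_cancel_left1)
  then show ?thesis unfolding x_hat_def fs_series_def takagi_def by simp
qed

definition star_coeffs :: "nat \<Rightarrow> nat \<Rightarrow> real" where
  "star_coeffs m k = (if m = 0 then 1 else if k < 2 ^ (m - 1) then 1 else -1)"

lemma x_star_eq: "x_star = fs_series star_coeffs"
  unfolding x_star_def star_coeffs_def by simp

lemma sign_coeffs_star: "sign_coeffs star_coeffs"
  unfolding sign_coeffs_def star_coeffs_def by auto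

lemma fs_level_star_left:
  assumes "0 \<le> t" "t \<le> 1/2"
  shows "fs_level star_coeffs m t = \<rho> ^ m * dist_int (2 ^ m * t)"
proof -
  have "star_coeffs m k * fs_e00 (2 ^ m * t - real k) = fs_e00 (2 ^ m * t - real k)" for k
  proof (cases "m = 0 \<or> k < 2 ^ (m - 1)")
    case False
    then have "(2::real) ^ m = 2 * 2 ^ (m - 1)" "2 ^ (m - 1) \<le> k" by (cases m; simp)+
    then have "2 ^ m * t \<le> 2 ^ (m - 1)" "2 ^ (m - 1) \<le> real k"
      using assms of_nat_mono[of "2 ^ (m - 1)" k] by auto
    then have "fs_e00 (2 ^ m * t - real k) = 0" by (intro fs_e00_eq_0 disjI1) linarith
    then show ?thesis by simp
  qed (auto simp: star_coeffs_def)
  then have "fs_level star_coeffs m t = \<rho> ^ m * (\<Sum>k<(2::nat) ^ m. fs_e00 (2 ^ m * t - real k))"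
    unfolding fs_level_eq by (simp only:)
  also have "\<dots> = \<rho> ^ m * dist_int (2 ^ m * t)"
    using assms by (subst sum_fs_e00_shift) (auto simp: mult_le_cancel_left1)
  finally show ?thesis .
qed

lemma fs_level_star_right:
  assumes "1/2 \<le> t" "t \<le> 1" "1 \<le> m"
  shows "fs_level star_coeffs m t = - (\<rho> ^ m * dist_int (2 ^ m * t))"
proof -
  have "star_coeffs m k * fs_e00 (2 ^ m * t - real k) = - fs_e00 (2 ^ m * t - real k)" for k
  proof (cases "k < 2 ^ (m - 1)")
    case True
    then have "real (k + 1) \<le> real (2 ^ (m - 1))" by (intro of_nat_mono) simp
    moreover have "(2::real) ^ m = 2 * 2 ^ (m - 1)" using assms(3) by (cases m) auto
    ultimately have "2 ^ (m - 1) \<le> 2 ^ m * t" "real k + 1 \<le> 2 ^ (m - 1)"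
      using assms by auto
    then have "fs_e00 (2 ^ m * t - real k) = 0" by (intro fs_e00_eq_0 disjI2) linarith
    then show ?thesis by simp
  qed (use assms in \<open>auto simp: star_coeffs_def\<close>)
  then have "fs_level star_coeffs m t = - (\<rho> ^ m * (\<Sum>k<(2::nat) ^ m. fs_e00 (2 ^ m * t - real k)))"
    unfolding fs_level_eq by (simp only: sum_negf)
  also have "\<dots> = - (\<rho> ^ m * dist_int (2 ^ m * t))"
    using assms by (subst sum_fs_e00_shift) (auto simp: mult_le_cancel_left1)
  finally show ?thesis .
qed

lemma x_star_left:
  assumes "0 \<le> t" "t \<le> 1/2"
  shows "x_star t = takagi t"
  unfolding x_star_eq fs_series_def takagi_def by (simp only: fs_level_star_left[OF assms])

text \<open>On the right half every level except the first changes sign.\<close>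
lemma x_star_right:
  assumes "1/2 \<le> t" "t \<le> 1"
  shows "x_star t = 2 * dist_int t - takagi t"
proof -
  have "x_star t = fs_level star_coeffs 0 t + (\<Sum>m. fs_level star_coeffs (Suc m) t)"
    unfolding x_star_eq fs_series_def
    using suminf_split_head[OF summable_fs_level[OF sign_coeffs_star, of t]] assms by simp
  also have "fs_level star_coeffs 0 t = dist_int t"
    using assms fs_e00_eq_dist_int[of t] unfolding fs_level_eq star_coeffs_def by simp
  also have "(\<Sum>m. fs_level star_coeffs (Suc m) t) = (\<Sum>m. - (\<rho> ^ Suc m * dist_int (2 ^ Suc m * t)))"
    using assms by (intro suminf_cong fs_level_star_right) auto
  also have "\<dots> = - (\<Sum>m. \<rho> ^ Suc m * dist_int (2 ^ Suc m * t))"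
    using summable_Suc_iff[of "\<lambda>j. \<rho> ^ j * dist_int (2 ^ j * t)"] summable_takagi[of t]
    by (intro suminf_minus) simp
  also have "(\<Sum>m. \<rho> ^ Suc m * dist_int (2 ^ Suc m * t)) = takagi t - dist_int t"
    unfolding takagi_def using suminf_split_head[OF summable_takagi, of t] by simp
  finally show ?thesis by simp
qed

lemma fs_nu_eq:
  assumes "1/2 < 2 ^ n * h" "2 ^ n * h \<le> 1"
  shows "fs_nu h = int n"
proof -
  have "0 < 2 ^ n * h" using assms(1) by linarith
  then have h: "0 < h" by (simp add: zero_less_mult_iff)
  have "log 2 (1/2) < log 2 (2 ^ n * h)" "log 2 (2 ^ n * h) \<le> 0"
    using assms h by simp_all
  moreover have "log 2 (2 ^ n * h) = real n + log 2 h" "log 2 (1/2::real) = -1"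
    using h by (simp_all add: log_mult log_nat_power log_divide)
  ultimately show ?thesis unfolding fs_nu_def by (simp add: floor_eq_iff)
qed

lemma fs_omega_eq:
  assumes "1/2 < 2 ^ n * h" "2 ^ n * h \<le> 1"
  shows "fs_omega h = (1 + \<rho>) * h * sqrt 2 ^ n + omega_const * \<rho> ^ n"
proof -
  have "1 / 3 * (sqrt 8 + 2) = omega_const"
    using real_sqrt_mult[of 4 2] unfolding omega_const_def by simp
  then show ?thesis
    unfolding fs_omega_def fs_nu_eq[OF assms] \<rho>_def
    using powr_half_eq_sqrt2_pow[of n] powr_minus_half_eq_rho_pow[of n]
    by (simp add: mult.commute \<rho>_def)
qed

lemma fs_omega_pos:
  assumes "0 < h" "h \<le> 1"
  shows "0 < fs_omega h"
proof -
  obtain n where n: "1/2 < 2 ^ n * h" "2 ^ n * h \<le> 1" using exists_dyadic_rescale[OF assms] by auto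
  have "0 < omega_const * \<rho> ^ n" using rho_pos unfolding omega_const_def
    by (intro mult_pos_pos divide_pos_pos add_pos_pos) auto
  moreover have "0 \<le> (1 + \<rho>) * h * sqrt 2 ^ n" using rho_pos assms by simp
  ultimately show ?thesis using fs_omega_eq[OF n] by simp
qed

section \<open>Upper bounds on increments\<close>

lemma fs_series_tail_abs_le:
  assumes "sign_coeffs \<theta>" "0 \<le> t" "t \<le> 1"
  shows "\<bar>\<Sum>j. fs_level \<theta> (j + n) t\<bar> \<le> \<rho> ^ n * takagi_max"
proof -
  have bound: "\<bar>fs_level \<theta> (j + n) t\<bar> \<le> \<rho> ^ (j + n) * dist_int (2 ^ (j + n) * t)" for j
    by (rule fs_level_abs_le[OF assms])
  note majorant = sums_summable[OF sums_takagi_tail[of n t]]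
  have "summable (\<lambda>j. \<bar>fs_level \<theta> (j + n) t\<bar>)"
    by (rule summable_comparison_test[OF _ majorant]) (use bound in auto)
  then have "\<bar>\<Sum>j. fs_level \<theta> (j + n) t\<bar> \<le> (\<Sum>j. \<rho> ^ (j + n) * dist_int (2 ^ (j + n) * t))"
    by (intro order.trans[OF summable_rabs] suminf_le bound majorant)
  also have "\<dots> = \<rho> ^ n * takagi (2 ^ n * t)"
    using sums_takagi_tail[of n t] by (rule sums_unique[symmetric])
  also have "\<dots> \<le> \<rho> ^ n * takagi_max"
    using rho_pos takagi_le_max by (intro mult_left_mono) auto
  finally show ?thesis .
qed

lemma fs_series_increment_le:
  assumes \<theta>: "sign_coeffs \<theta>" and t: "0 \<le> t" "0 \<le> h" "t + h \<le> 1" and n: "2 ^ n * h \<le> 1"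
  shows "\<bar>fs_series \<theta> (t + h) - fs_series \<theta> t\<bar>
    \<le> (sqrt 2 ^ n - 1) * (sqrt 2 + 1) * h + 2 * takagi_max * \<rho> ^ n"
proof -
  define tail where "tail x = (\<Sum>j. fs_level \<theta> (j + n) x)" for x
  define head where "head = (\<Sum>m<n. fs_level \<theta> m (t + h) - fs_level \<theta> m t)"
  have split: "fs_series \<theta> x = tail x + (\<Sum>m<n. fs_level \<theta> m x)" if "0 \<le> x" "x \<le> 1" for x
    unfolding fs_series_def tail_def
    by (rule suminf_split_initial_segment[OF summable_fs_level[OF \<theta> that]])
  have eq: "fs_series \<theta> (t + h) - fs_series \<theta> t = tail (t + h) - tail t + head"
    using split[of t] split[of "t + h"] t unfolding head_def by (simp add: sum_subtractf)
  have tail: "\<bar>tail x\<bar> \<le> \<rho> ^ n * takagi_max" if "0 \<le> x" "x \<le> 1" for x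
    unfolding tail_def using that by (rule fs_series_tail_abs_le[OF \<theta>])
  have "\<bar>fs_level \<theta> m (t + h) - fs_level \<theta> m t\<bar> \<le> \<rho> ^ m * 2 ^ m * h" if "m < n" for m
  proof (rule fs_level_diff_le[OF \<theta> t])
    have "(2::real) ^ m * h \<le> 2 ^ n * h"
      using that t by (intro mult_right_mono power_increasing) auto
    then show "2 ^ m * h \<le> 1" using n by simp
  qed
  then have "\<bar>head\<bar> \<le> (\<Sum>m<n. \<rho> ^ m * 2 ^ m) * h"
    unfolding head_def sum_distrib_right by (intro order.trans[OF sum_abs sum_mono]) auto
  moreover have "\<bar>tail (t + h) - tail t + head\<bar> \<le> \<bar>tail (t + h)\<bar> + \<bar>tail t\<bar> + \<bar>head\<bar>"
    by linarith
  moreover have "\<bar>tail t\<bar> \<le> \<rho> ^ n * takagi_max" "\<bar>tail (t + h)\<bar> \<le> \<rho> ^ n * takagi_max"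
    using t by (intro tail; simp)+
  ultimately have "\<bar>tail (t + h) - tail t + head\<bar>
      \<le> (sqrt 2 ^ n - 1) * (sqrt 2 + 1) * h + (\<rho> ^ n * takagi_max + \<rho> ^ n * takagi_max)"
    unfolding sum_rho_pow_two_pow by linarith
  then show ?thesis unfolding eq by (simp add: algebra_simps)
qed

lemma fs_series_increment_le_omega:
  assumes "sign_coeffs \<theta>" and h: "0 < h" "h \<le> 1" and t: "0 \<le> t" "t + h \<le> 1"
  shows "\<bar>fs_series \<theta> (t + h) - fs_series \<theta> t\<bar> \<le> sqrt 2 * fs_omega h"
proof -
  obtain n where n: "1/2 < 2 ^ n * h" "2 ^ n * h \<le> 1" using exists_dyadic_rescale[OF h] by auto
  have "\<bar>fs_series \<theta> (t + h) - fs_series \<theta> t\<bar>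
      \<le> (sqrt 2 ^ n - 1) * (sqrt 2 + 1) * h + 2 * takagi_max * \<rho> ^ n"
    using fs_series_increment_le[OF assms(1) t(1) _ t(2) n(2)] h by simp
  also have "\<dots> \<le> sqrt 2 ^ n * (sqrt 2 + 1) * h + 2 * takagi_max * \<rho> ^ n"
    using h by (simp add: algebra_simps)
  also have "\<dots> = sqrt 2 * fs_omega h"
  proof -
    have "sqrt 2 * (1 + \<rho>) = sqrt 2 + 1" and "sqrt 2 * omega_const = 2 * takagi_max"
      unfolding \<rho>_def omega_const_def takagi_max_def by (simp_all add: field_simps)
    moreover have "sqrt 2 * fs_omega h
        = (sqrt 2 * (1 + \<rho>)) * (h * sqrt 2 ^ n) + (sqrt 2 * omega_const) * \<rho> ^ n"
      unfolding fs_omega_eq[OF n] by (simp only: algebra_simps)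
    ultimately show ?thesis by (simp add: algebra_simps)
  qed
  finally show ?thesis .
qed

lemma x_hat_increment_le_omega:
  assumes h: "0 < h" "h \<le> 1" and t: "0 \<le> t" "t + h \<le> 1"
  shows "\<bar>x_hat (t + h) - x_hat t\<bar> \<le> fs_omega h"
proof -
  obtain n where n: "1/2 < 2 ^ n * h" "2 ^ n * h \<le> 1" using exists_dyadic_rescale[OF h] by auto
  have rho_sqrt2: "\<rho> ^ n * 2 ^ n = sqrt 2 ^ n"
    using rho_pow_mult_sqrt2_pow[of n] two_pow_eq_sqrt2_pow[of n] by (simp add: mult.assoc[symmetric])
  have "\<rho> ^ n * \<bar>takagi (2 ^ n * t + 2 ^ n * h) - takagi (2 ^ n * t)\<bar> \<le> \<rho> ^ n * (omega_const - \<rho> * (2 ^ n * h))"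
    using n rho_pos by (intro mult_left_mono takagi_increment_le) auto
  then have "\<bar>takagi (t + h) - takagi t\<bar>
      \<le> (sqrt 2 ^ n - 1) * (sqrt 2 + 1) * h + \<rho> ^ n * (omega_const - \<rho> * (2 ^ n * h))"
    using takagi_increment_split[of t h n] h by simp
  also have "\<dots> = (1 + \<rho>) * h * sqrt 2 ^ n + omega_const * \<rho> ^ n - (sqrt 2 + 1) * h"
    using rho_sqrt2 unfolding rho_eq by (simp add: algebra_simps)
  also have "\<dots> \<le> fs_omega h"
    unfolding fs_omega_eq[OF n] using h by simp
  finally show ?thesis using t h x_hat_eq_takagi by simp
qed

section \<open>Increments at dyadic scales\<close>

lemma sqrt2_pow_mult_half_pow: "sqrt 2 ^ n * (1/2) ^ n = \<rho> ^ n"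
  using rho_pow_mult_sqrt2_pow[of n] unfolding half_pow_eq_rho_pow by (simp add: algebra_simps)

lemma fs_omega_dyadic: "fs_omega (2/3 * (1/2) ^ n) = \<rho> ^ n * fs_omega (2/3)"
proof -
  have "2 ^ n * (2/3 * (1/2) ^ n) = (2/3::real)"
    by (simp add: power_one_over)
  then have "fs_omega (2/3 * (1/2) ^ n) = (1 + \<rho>) * (2/3) * (sqrt 2 ^ n * (1/2) ^ n) + omega_const * \<rho> ^ n"
    using fs_omega_eq[of n "2/3 * (1/2) ^ n"] by (simp add: algebra_simps)
  moreover have "fs_omega (2/3) = (1 + \<rho>) * (2/3) + omega_const"
    using fs_omega_eq[of 0 "2/3"] by simp
  ultimately show ?thesis unfolding sqrt2_pow_mult_half_pow by (simp add: algebra_simps)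
qed

text \<open>Below 2/3 * 2^(-n) the first n terms of takagi are still linear; the rest is the
  rescaled maximum at 2/3.\<close>
lemma takagi_dyadic:
  "takagi (2/3 * (1/2) ^ n) = \<rho> ^ n * fs_omega (2/3) - (sqrt 2 + 1) * (2/3 * (1/2) ^ n)"
proof -
  define h where "h = 2/3 * (1/2::real) ^ n"
  have h2: "2 ^ n * h = 2/3" unfolding h_def by (simp add: power_one_over)
  have "dist_int (2 ^ j * h) = 2 ^ j * h" if "j < n" for j
  proof (rule dist_int_id)
    have "(2::real) ^ Suc j * h \<le> 2 ^ n * h"
      using that unfolding h_def by (intro mult_right_mono power_increasing) auto
    then have "2 * (2 ^ j * h) \<le> 2/3" using h2 by (simp add: mult.assoc)
    then show "2 ^ j * h \<le> 1/2" by linarith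
  qed (simp add: h_def)
  then have "takagi h = (\<Sum>j<n. \<rho> ^ j * 2 ^ j) * h + \<rho> ^ n * takagi_max"
    using takagi_split[of h n] unfolding h2 takagi_two_thirds
    by (simp add: sum_distrib_right mult.assoc)
  also have "\<dots> = (sqrt 2 + 1) * (sqrt 2 ^ n * h) + \<rho> ^ n * takagi_max - (sqrt 2 + 1) * h"
    unfolding sum_rho_pow_two_pow by (simp add: algebra_simps)
  also have "sqrt 2 ^ n * h = 2/3 * \<rho> ^ n"
    unfolding h_def sqrt2_pow_mult_half_pow[symmetric] by simp
  also have "(sqrt 2 + 1) * (2/3 * \<rho> ^ n) + \<rho> ^ n * takagi_max
      = \<rho> ^ n * ((sqrt 2 + 1) * (2/3) + takagi_max)"
    by (simp add: algebra_simps)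
  also have "(sqrt 2 + 1) * (2/3) + takagi_max = fs_omega (2/3)"
    using fs_omega_eq[of 0 "2/3"] unfolding takagi_max_def omega_const_def rho_eq
    by (simp add: field_simps)
  finally show ?thesis unfolding h_def .
qed

lemma fs_omega_two_thirds_pos: "0 < fs_omega (2/3)"
  by (rule fs_omega_pos) auto

lemma x_hat_dyadic_ratio:
  "\<bar>x_hat (0 + 2/3 * (1/2) ^ n) - x_hat 0\<bar> / fs_omega (2/3 * (1/2) ^ n)
     = 1 - (sqrt 2 + 1) * (2/3) * \<rho> ^ n / fs_omega (2/3)"
proof -
  define h where "h = 2/3 * (1/2::real) ^ n"
  define r where "r = \<rho> ^ n"
  have r: "0 < r" "h = 2/3 * r * r" unfolding r_def h_def half_pow_eq_rho_pow using rho_pos by simp_all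
  have "(1/2::real) ^ n \<le> 1" by (rule power_le_one) auto
  then have "\<bar>x_hat (0 + h) - x_hat 0\<bar> = r * fs_omega (2/3) - (sqrt 2 + 1) * h"
    using x_hat_eq_takagi[of 0] x_hat_eq_takagi[of h] takagi_0 takagi_nonneg[of h] takagi_dyadic[of n]
    unfolding h_def r_def by simp
  moreover have "fs_omega h = r * fs_omega (2/3)" unfolding h_def r_def by (rule fs_omega_dyadic)
  ultimately have "\<bar>x_hat (0 + h) - x_hat 0\<bar> / fs_omega h
      = 1 - (sqrt 2 + 1) * (h / r) / fs_omega (2/3)"
    using r(1) fs_omega_two_thirds_pos by (simp add: field_simps)
  also have "h / r = 2/3 * r" using r by simp
  finally show ?thesis unfolding h_def r_def by (simp add: algebra_simps)
qed

text \<open>x_star is symmetric about 1/2 up to the sign of all levels but the first, so its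
  increment across 1/2 is twice the takagi increment.\<close>
lemma x_star_increment_across_half:
  assumes "0 \<le> a" "a \<le> 1/2"
  shows "\<bar>x_star ((1/2 - a) + 2 * a) - x_star (1/2 - a)\<bar> = 2 * takagi a - 2 * a"
proof -
  have left: "takagi (1/2 - a) = 1/2 - a + \<rho> * takagi (2 * a)"
    using takagi_rec[of "1/2 - a"] takagi_one_minus[of "2 * a"] dist_int_id[of "1/2 - a"] assms
    by (simp add: algebra_simps)
  have "x_star (1/2 + a) = 2 * dist_int (1/2 + a) - takagi (1/2 + a)"
    using assms by (intro x_star_right) auto
  also have "dist_int (1/2 + a) = 1/2 - a"
    using dist_int_one_minus[of "1/2 - a"] dist_int_id[of "1/2 - a"] assms by simp
  also have "takagi (1/2 + a) = takagi (1/2 - a)"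
    using takagi_one_minus[of "1/2 - a"] by simp
  finally have right: "x_star (1/2 + a) = 1 - 2 * a - takagi (1/2 - a)" by simp
  have "takagi a = a + \<rho> * takagi (2 * a)"
    using takagi_rec[of a] dist_int_id[of a] assms by simp
  moreover have "0 \<le> \<rho> * takagi (2 * a)" using rho_pos takagi_nonneg by simp
  ultimately show ?thesis
    using left right x_star_left[of "1/2 - a"] assms by (simp add: algebra_simps)
qed

lemma x_star_dyadic_ratio:
  fixes n :: nat
  defines "a \<equiv> 1/3 * (1/2::real) ^ n"
  shows "\<bar>x_star ((1/2 - a) + 2 * a) - x_star (1/2 - a)\<bar> / fs_omega (2 * a)
     = sqrt 2 - (2 * sqrt 2 + 4) * (1/3) * \<rho> ^ n / fs_omega (2/3)"
proof -
  define r where "r = \<rho> ^ n"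
  have r: "0 < r" "a = 1/3 * r * r" unfolding r_def a_def half_pow_eq_rho_pow using rho_pos by simp_all
  have "(1/2::real) ^ n \<le> 1" by (rule power_le_one) auto
  then have "\<bar>x_star ((1/2 - a) + 2 * a) - x_star (1/2 - a)\<bar> = 2 * takagi a - 2 * a"
    unfolding a_def by (intro x_star_increment_across_half) auto
  also have "takagi a = \<rho> * r * fs_omega (2/3) - (sqrt 2 + 1) * a"
    using takagi_dyadic[of "Suc n"] unfolding a_def r_def by simp
  finally have num: "\<bar>x_star ((1/2 - a) + 2 * a) - x_star (1/2 - a)\<bar>
      = sqrt 2 * r * fs_omega (2/3) - (2 * sqrt 2 + 4) * a"
    unfolding rho_eq by (simp add: algebra_simps)
  have "fs_omega (2 * a) = r * fs_omega (2/3)"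
    using fs_omega_dyadic[of n] unfolding a_def r_def by simp
  then have "\<bar>x_star ((1/2 - a) + 2 * a) - x_star (1/2 - a)\<bar> / fs_omega (2 * a)
      = sqrt 2 - (2 * sqrt 2 + 4) * (a / r) / fs_omega (2/3)"
    unfolding num using r(1) fs_omega_two_thirds_pos by (simp add: field_simps)
  also have "a / r = 1/3 * r" using r by simp
  finally show ?thesis unfolding r_def by (simp add: algebra_simps)
qed

section \<open>Limits superior\<close>

lemma Limsup_mono_filter:
  fixes f :: "'a \<Rightarrow> 'b::complete_lattice"
  assumes "F \<le> G"
  shows "Limsup F f \<le> Limsup G f"
  unfolding Limsup_def using assms by (intro INF_superset_mono) (auto simp: le_filter_def)

lemma Limsup_at_right_le:
  assumes "\<And>h. 0 < h \<Longrightarrow> h \<le> 1 \<Longrightarrow> f h \<le> C"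
  shows "Limsup (at_right (0::real)) f \<le> C"
  using assms by (intro Limsup_bounded) (auto simp: eventually_at_right_field intro: exI[of _ 1])

lemma Limsup_at_right_ge_sequence:
  fixes hs a :: "nat \<Rightarrow> real"
  assumes "filterlim hs (at_right 0) sequentially"
    and "\<And>n. ereal (a n) \<le> f (hs n)" and "a \<longlonglongrightarrow> L"
  shows "ereal L \<le> Limsup (at_right 0) f"
proof -
  have "ereal L = Limsup sequentially (\<lambda>n. ereal (a n))"
    using assms(3) by (intro lim_imp_Limsup[symmetric]) auto
  also have "\<dots> \<le> Limsup sequentially (\<lambda>n. f (hs n))"
    using assms(2) by (intro Limsup_mono) auto
  also have "\<dots> \<le> Limsup (filtermap hs sequentially) f"
    by (rule Limsup_filtermap_ge)
  also have "\<dots> \<le> Limsup (at_right 0) f"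
    using assms(1) unfolding filterlim_def by (rule Limsup_mono_filter)
  finally show ?thesis .
qed

lemma filterlim_dyadic_at_right_0:
  fixes c :: real
  assumes "0 < c"
  shows "filterlim (\<lambda>n. c * (1/2) ^ n) (at_right 0) sequentially"
proof (rule tendsto_imp_filterlim_at_right)
  show "(\<lambda>n. c * (1/2::real) ^ n) \<longlonglongrightarrow> 0"
    using tendsto_mult_right_zero[OF LIMSEQ_power_zero[of "1/2::real"]] by simp
qed (use assms in simp)

lemma rho_pow_ratio_tendsto: "(\<lambda>n. C * \<rho> ^ n / fs_omega (2/3)) \<longlonglongrightarrow> 0"
  using rho_pos rho_lt_1
  by (auto intro!: tendsto_divide_zero tendsto_mult_right_zero LIMSEQ_power_zero)

lemma fs_mod_le:
  assumes "0 < h" "h \<le> 1"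
    and "\<And>t. 0 \<le> t \<Longrightarrow> t \<le> 1 - h \<Longrightarrow> \<bar>x (t + h) - x t\<bar> \<le> C * fs_omega h"
  shows "fs_mod x h \<le> ereal C"
  unfolding fs_mod_def
  using assms fs_omega_pos[OF assms(1,2)] by (intro SUP_least) (simp add: divide_le_eq)

lemma fs_mod_ge:
  "0 \<le> t \<Longrightarrow> t \<le> 1 - h \<Longrightarrow> ereal (\<bar>x (t + h) - x t\<bar> / fs_omega h) \<le> fs_mod x h"
  unfolding fs_mod_def by (rule SUP_upper) auto

lemma Limsup_fs_mod_x_hat: "Limsup (at_right 0) (fs_mod x_hat) = 1"
proof (rule antisym)
  show "Limsup (at_right 0) (fs_mod x_hat) \<le> 1"
    unfolding one_ereal_def
    by (intro Limsup_at_right_le fs_mod_le) (use x_hat_increment_le_omega in auto)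
  have "ereal (1 - 0) \<le> Limsup (at_right 0) (fs_mod x_hat)"
  proof (rule Limsup_at_right_ge_sequence[OF filterlim_dyadic_at_right_0])
    show "ereal (1 - (sqrt 2 + 1) * (2/3) * \<rho> ^ n / fs_omega (2/3)) \<le> fs_mod x_hat (2/3 * (1/2) ^ n)"
      for n
    proof -
      have "(1/2::real) ^ n \<le> 1" by (rule power_le_one) auto
      then show ?thesis using fs_mod_ge[of 0 "2/3 * (1/2) ^ n" x_hat] x_hat_dyadic_ratio[of n] by simp
    qed
    show "(\<lambda>n. 1 - (sqrt 2 + 1) * (2/3) * \<rho> ^ n / fs_omega (2/3)) \<longlonglongrightarrow> 1 - 0"
      by (intro tendsto_diff tendsto_const rho_pow_ratio_tendsto)
  qed simp
  then show "1 \<le> Limsup (at_right 0) (fs_mod x_hat)" by (simp add: one_ereal_def)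
qed

lemma sqrt2_le_Limsup_of_ge_fs_mod_x_star:
  assumes "\<And>h. 0 < h \<Longrightarrow> h \<le> 1 \<Longrightarrow> fs_mod x_star h \<le> f h"
  shows "ereal (sqrt 2 - 0) \<le> Limsup (at_right 0) f"
proof (rule Limsup_at_right_ge_sequence[OF filterlim_dyadic_at_right_0[of "2/3"]])
  show "ereal (sqrt 2 - (2 * sqrt 2 + 4) * (1/3) * \<rho> ^ n / fs_omega (2/3)) \<le> f (2/3 * (1/2) ^ n)"
    for n
  proof -
    define a where "a = 1/3 * (1/2::real) ^ n"
    have "(1/2::real) ^ n \<le> 1" by (rule power_le_one) auto
    then have a: "0 \<le> 1/2 - a" "1/2 - a \<le> 1 - 2 * a" "0 < 2 * a" "2 * a \<le> 1" unfolding a_def by auto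
    have "ereal (sqrt 2 - (2 * sqrt 2 + 4) * (1/3) * \<rho> ^ n / fs_omega (2/3)) \<le> fs_mod x_star (2 * a)"
      using fs_mod_ge[OF a(1,2), of x_star] x_star_dyadic_ratio[of n] unfolding a_def by simp
    also have "\<dots> \<le> f (2 * a)" using assms a by auto
    finally show ?thesis unfolding a_def by simp
  qed
  show "(\<lambda>n. sqrt 2 - (2 * sqrt 2 + 4) * (1/3) * \<rho> ^ n / fs_omega (2/3)) \<longlonglongrightarrow> sqrt 2 - 0"
    by (intro tendsto_diff tendsto_const rho_pow_ratio_tendsto)
qed simp

lemma Limsup_SUP_fs_mod: "Limsup (at_right 0) (\<lambda>h. SUP x\<in>fs_X. fs_mod x h) = ereal (sqrt 2)"
proof (rule antisym)
  show "Limsup (at_right 0) (\<lambda>h. SUP x\<in>fs_X. fs_mod x h) \<le> ereal (sqrt 2)"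
    unfolding fs_X_eq using fs_series_increment_le_omega
    by (intro Limsup_at_right_le SUP_least fs_mod_le) (auto simp: mult.commute)
  have "x_star \<in> fs_X" unfolding fs_X_eq x_star_eq using sign_coeffs_star by blast
  then show "ereal (sqrt 2) \<le> Limsup (at_right 0) (\<lambda>h. SUP x\<in>fs_X. fs_mod x h)"
    using sqrt2_le_Limsup_of_ge_fs_mod_x_star[of "\<lambda>h. SUP x\<in>fs_X. fs_mod x h"]
    by (metis SUP_upper diff_zero)
qed

lemma Limsup_fs_mod_x_star: "Limsup (at_right 0) (fs_mod x_star) = ereal (sqrt 2)"
proof (rule antisym)
  show "Limsup (at_right 0) (fs_mod x_star) \<le> ereal (sqrt 2)"
    unfolding x_star_eq using fs_series_increment_le_omega[OF sign_coeffs_star]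
    by (intro Limsup_at_right_le fs_mod_le) (auto simp: mult.commute)
  show "ereal (sqrt 2) \<le> Limsup (at_right 0) (fs_mod x_star)"
    using sqrt2_le_Limsup_of_ge_fs_mod_x_star[of "fs_mod x_star"] by simp
qed

theorem theorem2p3:
  shows "Limsup (at_right 0) (fs_mod x_hat) = 1
       \<and> Limsup (at_right 0) (\<lambda>h. SUP x\<in>fs_X. fs_mod x h) = ereal (sqrt 2)
       \<and> Limsup (at_right 0) (fs_mod x_star) = ereal (sqrt 2)"
  using Limsup_fs_mod_x_hat Limsup_SUP_fs_mod Limsup_fs_mod_x_star by blast

end
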